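(* Let $G$ be a finite simple graph with diameter $2$. Then $G$ is $\chi_\rho$-critical if and only if for each edge $e=u_1u_2 \in E(G)$ at least one of the following statements holds: (i) $\alpha(G-e)>\alpha(G)$; (ii) there exist indices $\{i,j\}=\{1,2\}$, a vertex $y \in N_G[u_i]$ with $d_{G-e}(y,u_j) \geq 3$, and a maximum independent set $A$ of $G$ (i.e., $|A|=\alpha(G)$) such that $A \cap \{y, u_j\}= \emptyset$.
   Context: $N_G[v]=N_G(v)\cup\{v\}$ is the closed neighborhood; $\alpha(G)$ is the independence number. A $k$-packing coloring of $G$ is a map $c:V(G)\to\{1,\ldots,k\}$ such that two distinct vertices $u,v$ with $c(u)=c(v)=i$ satisfy $d_G(u,v)>i$ (distance between vertices in different components is infinite); $\chi_\rho(G)$ is the smallest $k$ for which such a coloring exists. $G$ is $\chi_\rho$-critical if $\chi_\rho(H)<\chi_\rho(G)$ for every proper subgraph $H$ of $G$. $G-e$ is $G$ with edge $e$ deleted. *)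

theory Defs
  imports Main "HOL-Library.Extended_Nat"
begin

definition simple_graph :: "'a set \<Rightarrow> 'a set set \<Rightarrow> bool" where
  "simple_graph V E \<longleftrightarrow> finite V \<and> (\<forall>e\<in>E. \<exists>u v. e = {u, v} \<and> u \<noteq> v \<and> u \<in> V \<and> v \<in> V)"

definition walk :: "'a set \<Rightarrow> 'a set set \<Rightarrow> 'a list \<Rightarrow> bool" where
  "walk V E xs \<longleftrightarrow> xs \<noteq> [] \<and> set xs \<subseteq> V \<and>
     (\<forall>i. Suc i < length xs \<longrightarrow> {xs ! i, xs ! Suc i} \<in> E)"

text \<open>Graph distance; infinite if no walk exists.\<close>
definition gdist :: "'a set \<Rightarrow> 'a set set \<Rightarrow> 'a \<Rightarrow> 'a \<Rightarrow> enat" where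
  "gdist V E u v = (INF xs \<in> {xs. walk V E xs \<and> hd xs = u \<and> last xs = v}. enat (length xs - 1))"

definition diameter :: "'a set \<Rightarrow> 'a set set \<Rightarrow> enat" where
  "diameter V E = (SUP p \<in> V \<times> V. gdist V E (fst p) (snd p))"

definition closed_nbhd :: "'a set \<Rightarrow> 'a set set \<Rightarrow> 'a \<Rightarrow> 'a set" where
  "closed_nbhd V E u = insert u {y \<in> V. {u, y} \<in> E}"

definition independent :: "'a set \<Rightarrow> 'a set set \<Rightarrow> 'a set \<Rightarrow> bool" where
  "independent V E A \<longleftrightarrow> A \<subseteq> V \<and> (\<forall>u\<in>A. \<forall>v\<in>A. {u, v} \<notin> E)"

definition indep_num :: "'a set \<Rightarrow> 'a set set \<Rightarrow> nat" where
  "indep_num V E = Max (card ` {A. independent V E A})"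

definition packing_coloring :: "'a set \<Rightarrow> 'a set set \<Rightarrow> nat \<Rightarrow> ('a \<Rightarrow> nat) \<Rightarrow> bool" where
  "packing_coloring V E k c \<longleftrightarrow> (\<forall>v\<in>V. c v \<in> {1..k}) \<and>
     (\<forall>u\<in>V. \<forall>v\<in>V. u \<noteq> v \<and> c u = c v \<longrightarrow> gdist V E u v > enat (c u))"

definition packing_chromatic :: "'a set \<Rightarrow> 'a set set \<Rightarrow> nat" where
  "packing_chromatic V E = (LEAST k. \<exists>c. packing_coloring V E k c)"

definition subgraph :: "'a set \<Rightarrow> 'a set set \<Rightarrow> 'a set \<Rightarrow> 'a set set \<Rightarrow> bool" where
  "subgraph V' E' V E \<longleftrightarrow> V' \<subseteq> V \<and> E' \<subseteq> E \<and> (\<forall>e\<in>E'. e \<subseteq> V')"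

definition chi_rho_critical :: "'a set \<Rightarrow> 'a set set \<Rightarrow> bool" where
  "chi_rho_critical V E \<longleftrightarrow> (\<forall>V' E'. subgraph V' E' V E \<and> (V', E') \<noteq> (V, E) \<longrightarrow>
      packing_chromatic V' E' < packing_chromatic V E)"

end

theory Submission
  imports Defs
begin

text \<open>
  In a graph of diameter 2 all colour classes except class 1 are singletons, so
  chi_rho(G) = n - alpha(G) + 1; and since every proper subgraph misses an edge, G is critical
  iff chi_rho(G - e) <= n - alpha(G) for every edge e. Each of the two conditions yields such a
  colouring of G - e: a maximum independent set of G - e in colour 1, resp. a maximum independent
  set of G in colour 1 and the pair y, u_j at distance at least 3 in colour 2.
  Conversely, a pair at distance at least 3 in G - e consists of an endpoint u_j of e and a vertex
  of N_G[u_i]; no three vertices are pairwise at such distance, and two disjoint such pairs are at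
  distance at most 3. So in an optimal packing colouring of G - e at most one colour greater than 1
  is used twice. Counting then shows that, unless alpha(G - e) > alpha(G), class 1 is a maximum
  independent set of G avoiding such a pair.
\<close>

lemma walk_Nil [simp]: "\<not> walk V E []"
  unfolding walk_def by simp

lemma walk_singleton [simp]: "walk V E [x] \<longleftrightarrow> x \<in> V"
  unfolding walk_def by simp

lemma walk_Cons_Cons [simp]:
  "walk V E (x # y # xs) \<longleftrightarrow> x \<in> V \<and> {x, y} \<in> E \<and> walk V E (y # xs)"
  unfolding walk_def by (auto simp: less_Suc_eq_0_disj)

lemma walk_rev: "walk V E xs \<Longrightarrow> walk V E (rev xs)"
  unfolding walk_def
proof (intro conjI allI impI; (elim conjE)?)
  fix i assume "xs \<noteq> []" and "\<forall>i. Suc i < length xs \<longrightarrow> {xs ! i, xs ! Suc i} \<in> E"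
    and i: "Suc i < length (rev xs)"
  then have "{xs ! (length xs - Suc (Suc i)), xs ! Suc (length xs - Suc (Suc i))} \<in> E"
    by simp
  moreover have "Suc (length xs - Suc (Suc i)) = length xs - Suc i"
    using i by simp
  ultimately show "{rev xs ! i, rev xs ! Suc i} \<in> E"
    using i by (simp add: rev_nth insert_commute)
qed auto

lemma gdist_le_walk_length: "walk V E xs \<Longrightarrow> gdist V E (hd xs) (last xs) \<le> enat (length xs - 1)"
  unfolding gdist_def by (rule INF_lower) simp

lemma gdist_less_enat_iff:
  "gdist V E u v < enat n \<longleftrightarrow> (\<exists>xs. walk V E xs \<and> hd xs = u \<and> last xs = v \<and> length xs \<le> n)"
proof -
  have "xs \<noteq> [] \<Longrightarrow> length xs - 1 < n \<longleftrightarrow> length xs \<le> n" for xs :: "'a list"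
    by (cases xs) auto
  then show ?thesis
    unfolding gdist_def INF_less_iff by (auto simp: walk_def)
qed

lemma gdist_commute: "gdist V E u v = gdist V E v u"
proof -
  have "gdist V E v u \<le> gdist V E u v" for u v
    unfolding gdist_def
  proof (rule INF_greatest)
    fix xs assume "xs \<in> {xs. walk V E xs \<and> hd xs = u \<and> last xs = v}"
    then have "rev xs \<in> {xs. walk V E xs \<and> hd xs = v \<and> last xs = u}"
      by (auto simp: walk_rev hd_rev last_rev)
    then show "(INF ys\<in>{xs. walk V E xs \<and> hd xs = v \<and> last xs = u}. enat (length ys - 1))
        \<le> enat (length xs - 1)"
      by (metis (no_types, lifting) INF_lower length_rev)
  qed
  then show ?thesis by (blast intro: antisym)
qed

lemma gdist_doubleton: "{x, z} = {a, b} \<Longrightarrow> gdist V E x z = gdist V E a b"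
  by (metis doubleton_eq_iff gdist_commute)

lemma gdist_self: "x \<in> V \<Longrightarrow> gdist V E x x = 0"
  using gdist_le_walk_length[of V E "[x]"] by (simp add: zero_enat_def[symmetric])

lemma gdist_antimono: "V' \<subseteq> V \<Longrightarrow> E' \<subseteq> E \<Longrightarrow> gdist V E u v \<le> gdist V' E' u v"
  unfolding gdist_def walk_def by (rule INF_superset_mono) auto

lemma gdist_edge: "{x, z} \<in> E \<Longrightarrow> x \<in> V \<Longrightarrow> z \<in> V \<Longrightarrow> gdist V E x z \<le> 1"
  using gdist_le_walk_length[of V E "[x, z]"] by (simp add: one_enat_def)

lemma one_less_gdist: "x \<noteq> z \<Longrightarrow> {x, z} \<notin> E \<Longrightarrow> 1 < gdist V E x z"
proof (rule ccontr)
  assume "x \<noteq> z" "{x, z} \<notin> E" "\<not> 1 < gdist V E x z"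
  then have "gdist V E x z < enat 2"
    by (cases "gdist V E x z") (auto simp: one_enat_def)
  then obtain xs where "walk V E xs" "hd xs = x" "last xs = z" "length xs \<le> 2"
    using gdist_less_enat_iff by metis
  with \<open>x \<noteq> z\<close> \<open>{x, z} \<notin> E\<close> show False
    by (cases xs rule: remdups_adj.cases) auto
qed

lemma gdist_less_3_cases:
  assumes "gdist V E x z < 3" and "x \<noteq> z"
  shows "{x, z} \<in> E \<or> (\<exists>w\<in>V. {x, w} \<in> E \<and> {w, z} \<in> E)"
proof -
  obtain xs where "walk V E xs" "hd xs = x" "last xs = z" "length xs \<le> 3"
    using assms(1) gdist_less_enat_iff[of V E x z 3] by (auto simp: numeral_eq_enat)
  with \<open>x \<noteq> z\<close> show ?thesis
    by (cases xs rule: remdups_adj.cases; cases "tl (tl xs)") auto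
qed

lemma simple_graph_edge: "simple_graph V E \<Longrightarrow> {u, v} \<in> E \<Longrightarrow> u \<in> V \<and> v \<in> V \<and> u \<noteq> v"
  unfolding simple_graph_def by (metis doubleton_eq_iff)

lemma simple_graph_Diff: "simple_graph V E \<Longrightarrow> simple_graph V (E - F)"
  unfolding simple_graph_def by blast

lemma card_filter_not:
  assumes "finite V"
  shows "card {v \<in> V. \<not> P v} = card V - card {v \<in> V. P v}"
proof -
  have "{v \<in> V. \<not> P v} = V - {v \<in> V. P v}"
    by blast
  moreover have "finite {v \<in> V. P v}"
    using assms by simp
  ultimately show ?thesis
    by (simp add: card_Diff_subset)
qed

lemma card_le_indep_num: "finite V \<Longrightarrow> independent V E A \<Longrightarrow> card A \<le> indep_num V E"
  unfolding indep_num_def independent_def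
  by (rule Max_ge) (auto intro: finite_subset[of _ "Pow V"])

lemma ex_maximum_independent: "finite V \<Longrightarrow> \<exists>A. independent V E A \<and> card A = indep_num V E"
proof -
  assume "finite V"
  then have "finite (card ` {A. independent V E A})"
    unfolding independent_def by (auto intro: finite_subset[of _ "Pow V"])
  moreover have "independent V E {}"
    unfolding independent_def by simp
  ultimately have "indep_num V E \<in> card ` {A. independent V E A}"
    unfolding indep_num_def by (intro Max_in) auto
  then show ?thesis by auto
qed

lemma indep_num_le_card: "finite V \<Longrightarrow> indep_num V E \<le> card V"
  by (metis card_mono ex_maximum_independent independent_def)

lemma independent_antimono: "independent V E A \<Longrightarrow> E' \<subseteq> E \<Longrightarrow> independent V E' A"
  unfolding independent_def by blast

lemma packing_chromatic_le: "packing_coloring V E k c \<Longrightarrow> packing_chromatic V E \<le> k"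
  unfolding packing_chromatic_def by (rule Least_le) blast

lemma packing_coloring_range: "packing_coloring V E k c \<Longrightarrow> v \<in> V \<Longrightarrow> c v \<in> {1..k}"
  unfolding packing_coloring_def by blast

lemma packing_coloring_gdist:
  "packing_coloring V E k c \<Longrightarrow> u \<in> V \<Longrightarrow> v \<in> V \<Longrightarrow> u \<noteq> v \<Longrightarrow> c u = c v
    \<Longrightarrow> enat (Suc (c u)) \<le> gdist V E u v"
  unfolding packing_coloring_def Suc_ile_eq by blast

lemma packing_coloring_upper_class_gdist:
  assumes "packing_coloring V E k c" "u \<in> V" "v \<in> V" "u \<noteq> v" "c u = c v" "c u \<noteq> 1"
  shows "3 \<le> gdist V E u v"
proof -
  have "c u \<ge> 2"
    using packing_coloring_range[OF assms(1,2)] assms(6) by simp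
  then have "enat 3 \<le> enat (Suc (c u))"
    by simp
  then show ?thesis
    unfolding numeral_eq_enat using packing_coloring_gdist[OF assms(1-5)] by (rule order_trans)
qed

lemma packing_coloring_extend:
  assumes "finite V" and "S \<subseteq> V" and colors: "\<forall>v\<in>S. c v \<in> {1..m}"
    and packing: "\<forall>u\<in>S. \<forall>v\<in>S. u \<noteq> v \<and> c u = c v \<longrightarrow> enat (c u) < gdist V E u v"
  shows "\<exists>c'. packing_coloring V E (m + card (V - S)) c'"
proof -
  obtain h where h: "bij_betw h (V - S) {0..<card (V - S)}"
    using ex_bij_betw_finite_nat \<open>finite V\<close> by blast
  define c' where "c' v = (if v \<in> S then c v else m + 1 + h v)" for v
  have "packing_coloring V E (m + card (V - S)) c'"
    unfolding packing_coloring_def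
  proof (intro conjI ballI impI)
    fix v assume "v \<in> V"
    then show "c' v \<in> {1..m + card (V - S)}"
      using colors bij_betw_apply[OF h, of v] by (auto simp: c'_def)
  next
    fix u v assume "u \<in> V" "v \<in> V" and uv: "u \<noteq> v \<and> c' u = c' v"
    moreover have "h u \<noteq> h v" if "u \<in> V - S" "v \<in> V - S"
      using uv that bij_betw_imp_inj_on[OF h] by (auto dest: inj_onD)
    ultimately show "enat (c' u) < gdist V E u v"
      using colors packing by (auto simp: c'_def split: if_splits)
  qed
  then show ?thesis by blast
qed

lemma packing_coloring_packing_chromatic:
  assumes "finite V"
  shows "\<exists>c. packing_coloring V E (packing_chromatic V E) c"
proof -
  obtain c where "packing_coloring V E (0 + card (V - {})) c"
    using packing_coloring_extend[of V "{}" "\<lambda>_. 0" 0 E] assms by blast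
  then show ?thesis
    unfolding packing_chromatic_def by (rule LeastI[where P = "\<lambda>k. \<exists>c. packing_coloring V E k c", OF exI])
qed

lemma packing_chromatic_subgraph_le:
  assumes "subgraph V' E' V E" and "finite V"
  shows "packing_chromatic V' E' \<le> packing_chromatic V E"
proof -
  obtain c where c: "packing_coloring V E (packing_chromatic V E) c"
    using packing_coloring_packing_chromatic \<open>finite V\<close> by blast
  have "V' \<subseteq> V" "E' \<subseteq> E"
    using assms(1) unfolding subgraph_def by auto
  then have "packing_coloring V' E' (packing_chromatic V E) c"
    using c gdist_antimono[of V' V E' E] unfolding packing_coloring_def
    by (meson less_le_trans subsetD)
  then show ?thesis by (rule packing_chromatic_le)
qed

lemma packing_chromatic_le_independent:
  assumes "finite V" and "independent V E A"
  shows "packing_chromatic V E \<le> card V - card A + 1"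
proof -
  have "A \<subseteq> V" and "\<forall>u\<in>A. \<forall>v\<in>A. u \<noteq> v \<longrightarrow> enat 1 < gdist V E u v"
    using assms(2) one_less_gdist[of _ _ E V] unfolding independent_def one_enat_def[symmetric]
    by blast+
  then obtain c where "packing_coloring V E (1 + card (V - A)) c"
    using packing_coloring_extend[of V A "\<lambda>_. 1" 1 E] \<open>finite V\<close> by auto
  moreover have "card (V - A) = card V - card A"
    using \<open>A \<subseteq> V\<close> \<open>finite V\<close> by (meson card_Diff_subset finite_subset)
  ultimately show ?thesis
    using packing_chromatic_le by fastforce
qed

lemma packing_chromatic_le_independent_far_pair:
  assumes "finite V" and A: "independent V E A" and "y \<in> V" "b \<in> V" "y \<notin> A" "b \<notin> A"
    and far: "3 \<le> gdist V E y b"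
  shows "packing_chromatic V E \<le> card V - card A"
proof -
  have "y \<noteq> b"
    using far gdist_self[OF \<open>b \<in> V\<close>, of E] by auto
  let ?S = "A \<union> {y, b}" and ?c = "\<lambda>v. if v \<in> A then 1 else 2 :: nat"
  have "A \<subseteq> V"
    using A unfolding independent_def by blast
  have packing: "\<forall>u\<in>?S. \<forall>v\<in>?S. u \<noteq> v \<and> ?c u = ?c v \<longrightarrow> enat (?c u) < gdist V E u v"
  proof (intro ballI impI)
    fix u v assume "u \<in> ?S" "v \<in> ?S" "u \<noteq> v \<and> ?c u = ?c v"
    then consider "u \<in> A" "v \<in> A" | "{u, v} = {y, b}" "u \<notin> A"
      using \<open>y \<notin> A\<close> \<open>b \<notin> A\<close> by (auto split: if_splits)
    then show "enat (?c u) < gdist V E u v"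
    proof cases
      case 1
      then show ?thesis
        using A one_less_gdist[of u v E V] \<open>u \<noteq> v \<and> ?c u = ?c v\<close>
        unfolding independent_def one_enat_def by simp
    next
      case 2
      then show ?thesis
        using far gdist_doubleton[of u v y b V E]
        by (simp add: Suc_ile_eq[symmetric] numeral_eq_enat)
    qed
  qed
  moreover have "?S \<subseteq> V"
    using \<open>A \<subseteq> V\<close> \<open>y \<in> V\<close> \<open>b \<in> V\<close> by auto
  moreover have "\<forall>v\<in>?S. ?c v \<in> {1..2}"
    by simp
  ultimately have "\<exists>c. packing_coloring V E (2 + card (V - ?S)) c"
    by (intro packing_coloring_extend[OF \<open>finite V\<close>])
  moreover have "V - ?S = V - A - {y, b}"
    by blast
  ultimately have "packing_chromatic V E \<le> 2 + card (V - A - {y, b})"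
    using packing_chromatic_le by auto
  also have "\<dots> = card V - card A"
  proof -
    have "{y, b} \<subseteq> V - A" "card {y, b} = 2"
      using \<open>y \<in> V\<close> \<open>b \<in> V\<close> \<open>y \<notin> A\<close> \<open>b \<notin> A\<close> \<open>y \<noteq> b\<close> by auto
    then have "2 + card (V - A - {y, b}) = card (V - A)"
      using \<open>finite V\<close> card_mono[of "V - A" "{y, b}"] by (simp add: card_Diff_subset)
    also have "card (V - A) = card V - card A"
      using \<open>A \<subseteq> V\<close> \<open>finite V\<close> by (meson card_Diff_subset finite_subset)
    finally show ?thesis .
  qed
  finally show ?thesis .
qed

lemma packing_coloring_first_class_independent:
  assumes "simple_graph V E" and "packing_coloring V E k c"
  shows "independent V E {v \<in> V. c v = 1}"
  unfolding independent_def
proof (intro conjI ballI notI)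
  fix u v assume "u \<in> {v \<in> V. c v = 1}" "v \<in> {v \<in> V. c v = 1}" "{u, v} \<in> E"
  then have "u \<in> V" "v \<in> V" "u \<noteq> v" "c u = c v" "c u = 1"
    using simple_graph_edge[OF assms(1)] by auto
  then have "enat (Suc 1) \<le> gdist V E u v"
    using packing_coloring_gdist[OF assms(2)] by metis
  moreover have "gdist V E u v \<le> enat 1"
    using gdist_edge \<open>{u, v} \<in> E\<close> \<open>u \<in> V\<close> \<open>v \<in> V\<close> by (metis one_enat_def)
  ultimately show False
    by (metis Suc_n_not_le_n enat_ord_simps(1) order_trans)
qed auto

lemma card_colors_above_one_le:
  assumes "packing_coloring V E k c"
  shows "card (c ` {v \<in> V. c v \<noteq> 1}) \<le> k - 1"
proof -
  have "c ` {v \<in> V. c v \<noteq> 1} \<subseteq> {2..k}"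
    using packing_coloring_range[OF assms] by fastforce
  then show ?thesis
    using card_mono[of "{2..k}"] by fastforce
qed

lemma chi_rho_critical_iff_edge_deletions:
  assumes "simple_graph V E" and no_isolated: "\<forall>v\<in>V. \<exists>e\<in>E. v \<in> e"
  shows "chi_rho_critical V E \<longleftrightarrow> (\<forall>e\<in>E. packing_chromatic V (E - {e}) < packing_chromatic V E)"
proof
  show "\<forall>e\<in>E. packing_chromatic V (E - {e}) < packing_chromatic V E" if "chi_rho_critical V E"
  proof
    fix e assume "e \<in> E"
    then have "subgraph V (E - {e}) V E" "(V, E - {e}) \<noteq> (V, E)"
      using assms(1) unfolding subgraph_def simple_graph_def by auto
    then show "packing_chromatic V (E - {e}) < packing_chromatic V E"
      using that unfolding chi_rho_critical_def by simp
  qed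
next
  assume edge_deletions: "\<forall>e\<in>E. packing_chromatic V (E - {e}) < packing_chromatic V E"
  show "chi_rho_critical V E"
    unfolding chi_rho_critical_def
  proof (intro allI impI, elim conjE)
    fix V' E' assume sub: "subgraph V' E' V E" and proper: "(V', E') \<noteq> (V, E)"
    have "V' \<subseteq> V" "E' \<subseteq> E" "\<forall>e\<in>E'. e \<subseteq> V'"
      using sub unfolding subgraph_def by auto
    obtain e where "e \<in> E" "e \<notin> E'"
    proof (cases "E' = E")
      case True
      with proper \<open>V' \<subseteq> V\<close> obtain v where "v \<in> V" "v \<notin> V'"
        by auto
      with no_isolated \<open>\<forall>e\<in>E'. e \<subseteq> V'\<close> show ?thesis
        using that by auto
    next
      case False
      with \<open>E' \<subseteq> E\<close> show ?thesis
        using that by auto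
    qed
    then have "subgraph V' E' V (E - {e})"
      using sub unfolding subgraph_def by auto
    then have "packing_chromatic V' E' \<le> packing_chromatic V (E - {e})"
      using assms(1) unfolding simple_graph_def by (blast intro: packing_chromatic_subgraph_le)
    also have "\<dots> < packing_chromatic V E"
      using edge_deletions \<open>e \<in> E\<close> by blast
    finally show "packing_chromatic V' E' < packing_chromatic V E" .
  qed
qed

locale diameter_two_graph =
  fixes V :: "'a set" and E :: "'a set set"
  assumes simple: "simple_graph V E" and diameter: "diameter V E = 2"
begin

lemma finite_V: "finite V"
  using simple unfolding simple_graph_def by blast

lemma gdist_le_2: "u \<in> V \<Longrightarrow> v \<in> V \<Longrightarrow> gdist V E u v \<le> 2"
  using SUP_upper[of "(u, v)" "V \<times> V" "\<lambda>p. gdist V E (fst p) (snd p)"]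
  unfolding diameter[symmetric] diameter_def by simp

lemma adjacent_or_common_neighbor:
  assumes "u \<in> V" "v \<in> V" "u \<noteq> v"
  shows "{u, v} \<in> E \<or> (\<exists>w\<in>V. {u, w} \<in> E \<and> {w, v} \<in> E)"
proof -
  have "gdist V E u v < 3"
    using gdist_le_2[OF assms(1,2)] by (rule order_le_less_trans) simp
  then show ?thesis
    using \<open>u \<noteq> v\<close> by (rule gdist_less_3_cases)
qed

lemma ex_other_vertex: "v \<in> V \<Longrightarrow> \<exists>u\<in>V. u \<noteq> v"
proof (rule ccontr)
  assume "v \<in> V" "\<not> (\<exists>u\<in>V. u \<noteq> v)"
  then have "V = {v}"
    by blast
  then have "diameter V E = 0"
    unfolding diameter_def using gdist_self[of v V E] by simp
  then show False
    using diameter by simp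
qed

lemma V_nonempty: "V \<noteq> {}"
  using diameter unfolding diameter_def by (auto simp: bot_enat_def)

lemma no_isolated_vertex:
  assumes "v \<in> V"
  shows "\<exists>e\<in>E. v \<in> e"
proof -
  obtain u where "u \<in> V" "v \<noteq> u"
    using ex_other_vertex[OF assms] by blast
  then show ?thesis
    using adjacent_or_common_neighbor[OF assms] by blast
qed

lemma packing_coloring_card_ge:
  assumes c: "packing_coloring V E k c"
  shows "card V - indep_num V E + 1 \<le> k"
proof -
  let ?C = "{v \<in> V. c v = 1}" and ?R = "{v \<in> V. c v \<noteq> 1}"
  have "card ?C \<le> indep_num V E"
    using card_le_indep_num[OF finite_V packing_coloring_first_class_independent[OF simple c]] .
  moreover have "card ?R = card V - card ?C"
    using card_filter_not[OF finite_V] .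
  moreover have "inj_on c ?R"
  proof (rule inj_onI, rule ccontr)
    fix u v assume "u \<in> ?R" "v \<in> ?R" "c u = c v" "u \<noteq> v"
    then have "3 \<le> gdist V E u v"
      using packing_coloring_upper_class_gdist[OF c] by simp
    also have "gdist V E u v \<le> 2"
      using gdist_le_2 \<open>u \<in> ?R\<close> \<open>v \<in> ?R\<close> by simp
    finally show False
      by simp
  qed
  then have "card ?R \<le> k - 1"
    using card_colors_above_one_le[OF c] by (simp add: card_image)
  moreover have "k \<ge> 1"
    using packing_coloring_range[OF c] V_nonempty by fastforce
  ultimately show ?thesis
    by linarith
qed

lemma packing_chromatic_eq: "packing_chromatic V E = card V - indep_num V E + 1"
proof (rule antisym)
  obtain A where "independent V E A" "card A = indep_num V E"
    using ex_maximum_independent[OF finite_V] by blast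
  then show "packing_chromatic V E \<le> card V - indep_num V E + 1"
    using packing_chromatic_le_independent[OF finite_V] by metis
  obtain c where "packing_coloring V E (packing_chromatic V E) c"
    using packing_coloring_packing_chromatic[OF finite_V] by blast
  then show "card V - indep_num V E + 1 \<le> packing_chromatic V E"
    by (rule packing_coloring_card_ge)
qed

end

locale diameter_two_graph_edge = diameter_two_graph +
  fixes u1 u2 :: 'a
  assumes edge: "{u1, u2} \<in> E"
begin

abbreviation far :: "'a \<Rightarrow> 'a \<Rightarrow> bool" where
  "far x z \<equiv> 3 \<le> gdist V (E - {{u1, u2}}) x z"

abbreviation far_pair_condition :: bool where
  "far_pair_condition \<equiv> \<exists>(a, b) \<in> {(u1, u2), (u2, u1)}. \<exists>y \<in> closed_nbhd V E a.
     far y b \<and> (\<exists>A. independent V E A \<and> card A = indep_num V E \<and> A \<inter> {y, b} = {})"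

lemma endpoints: "u1 \<in> V" "u2 \<in> V" "u1 \<noteq> u2"
  using simple_graph_edge[OF simple edge] by auto

lemma far_commute: "far x z \<Longrightarrow> far z x"
  using gdist_commute[of V "E - {{u1, u2}}" x z] by simp

lemma far_imp_neq: "x \<in> V \<Longrightarrow> far x z \<Longrightarrow> x \<noteq> z"
  using gdist_self[of x V "E - {{u1, u2}}"] by auto

lemma not_far_if_edge:
  assumes "{x, z} \<in> E - {{u1, u2}}" "x \<in> V" "z \<in> V"
  shows "\<not> far x z"
proof
  assume "far x z"
  also have "gdist V (E - {{u1, u2}}) x z \<le> 1"
    using gdist_edge[OF assms] .
  finally show False
    by simp
qed

lemma not_far_if_path:
  assumes "{x, w} \<in> E - {{u1, u2}}" "{w, z} \<in> E - {{u1, u2}}" "x \<in> V" "w \<in> V" "z \<in> V"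
  shows "\<not> far x z"
proof
  assume "far x z"
  also have "gdist V (E - {{u1, u2}}) x z \<le> enat 2"
    using gdist_le_walk_length[of V "E - {{u1, u2}}" "[x, w, z]"] assms by (simp add: numeral_2_eq_2)
  finally show False
    by (simp add: numeral_eq_enat)
qed

lemma far_pair_endpoint_neighbor:
  assumes "x \<in> V" "z \<in> V" "far x z"
  shows "\<exists>a b y. {a, b} = {u1, u2} \<and> y \<in> closed_nbhd V E a \<and> {y, b} = {x, z}"
proof -
  have "x \<noteq> z"
    using far_imp_neq[OF assms(1,3)] .
  then consider "{x, z} \<in> E" | w where "w \<in> V" "{x, w} \<in> E" "{w, z} \<in> E"
    using adjacent_or_common_neighbor[OF assms(1,2)] by blast
  then show ?thesis
  proof cases
    case 1
    then have "{x, z} = {u1, u2}"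
      using not_far_if_edge[of x z] assms by blast
    moreover have "u1 \<in> closed_nbhd V E u1"
      unfolding closed_nbhd_def by simp
    ultimately show ?thesis
      by blast
  next
    case 2
    then have "{x, w} = {u1, u2} \<or> {w, z} = {u1, u2}"
      using not_far_if_path[of x w z] assms by blast
    then show ?thesis
    proof
      assume "{x, w} = {u1, u2}"
      then have "{w, x} = {u1, u2}"
        by (simp add: insert_commute)
      moreover have "z \<in> closed_nbhd V E w"
        using 2 assms(2) unfolding closed_nbhd_def by simp
      moreover have "{z, x} = {x, z}"
        by (rule insert_commute)
      ultimately show ?thesis
        by blast
    next
      assume "{w, z} = {u1, u2}"
      moreover have "x \<in> closed_nbhd V E w"
        using 2 assms(1) unfolding closed_nbhd_def by (simp add: insert_commute)
      ultimately show ?thesis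
        by blast
    qed
  qed
qed

lemma far_meets_edge:
  assumes "x \<in> V" "z \<in> V" "far x z"
  shows "x \<in> {u1, u2} \<or> z \<in> {u1, u2}"
proof -
  obtain a b y where "{a, b} = {u1, u2}" "{y, b} = {x, z}"
    using far_pair_endpoint_neighbor[OF assms] by blast
  then have "b \<in> {u1, u2}" "b \<in> {x, z}"
    by (metis insertCI)+
  then show ?thesis
    by blast
qed

lemma far_from_endpoint_adjacent_to_other:
  assumes "w \<in> V" "w \<notin> {u1, u2}" "{a, b} = {u1, u2}" "far w a"
  shows "{w, b} \<in> E - {{u1, u2}}"
proof -
  have "a \<in> V" "b \<in> {u1, u2}" "a \<noteq> b"
    using assms(3) endpoints by (auto simp: doubleton_eq_iff)
  obtain a' b' y where "{a', b'} = {u1, u2}" "y \<in> closed_nbhd V E a'" "{y, b'} = {w, a}"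
    using far_pair_endpoint_neighbor[OF assms(1) \<open>a \<in> V\<close> assms(4)] by blast
  moreover have "b' \<in> {u1, u2}"
    using \<open>{a', b'} = {u1, u2}\<close> by (metis insertCI)
  ultimately have "y = w" "a' = b"
    using assms(2,3) \<open>a \<noteq> b\<close> by (auto simp: doubleton_eq_iff)
  then have "w \<in> closed_nbhd V E b" "w \<noteq> b"
    using \<open>y \<in> closed_nbhd V E a'\<close> \<open>b \<in> {u1, u2}\<close> assms(2) by auto
  then show ?thesis
    using assms(2) unfolding closed_nbhd_def by (auto simp: insert_commute)
qed

lemma far_from_two_imp_endpoint:
  assumes "w \<in> V" "a \<in> V" "b \<in> V" "a \<noteq> b" "far w a" "far w b"
  shows "w \<in> {u1, u2}"
proof (rule ccontr)
  assume "w \<notin> {u1, u2}"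
  then have "{a, b} = {u1, u2}"
    using far_meets_edge[OF assms(1,2,5)] far_meets_edge[OF assms(1,3,6)] assms(4) endpoints(3)
    by auto
  then have "{w, b} \<in> E - {{u1, u2}}"
    using far_from_endpoint_adjacent_to_other[OF assms(1) \<open>w \<notin> {u1, u2}\<close> _ assms(5)] by blast
  then show False
    using not_far_if_edge[OF _ assms(1,3)] assms(6) by blast
qed

lemma no_far_triangle:
  assumes "x \<in> V" "z \<in> V" "p \<in> V" "far x z" "far x p" "far z p"
  shows False
proof -
  have "x \<noteq> z" "x \<noteq> p" "z \<noteq> p"
    using far_imp_neq[of x z] far_imp_neq[of x p] far_imp_neq[of z p] assms by auto
  then have "x \<in> {u1, u2}" "z \<in> {u1, u2}" "p \<in> {u1, u2}"
    using far_from_two_imp_endpoint[of x z p] far_from_two_imp_endpoint[of z x p]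
      far_from_two_imp_endpoint[of p x z] far_commute[of x z] far_commute[of x p]
      far_commute[of z p] assms by auto
  with \<open>x \<noteq> z\<close> \<open>x \<noteq> p\<close> \<open>z \<noteq> p\<close> show False
    by auto
qed

lemma gdist_le_3_to_endpoint:
  assumes "z \<in> V" "q \<in> V" "z \<notin> {u1, u2}" "q \<notin> {u1, u2}" "z \<noteq> q"
    and "t \<in> {u1, u2}" "{q, t} \<in> E - {{u1, u2}}"
  shows "gdist V (E - {{u1, u2}}) z t \<le> 3"
proof -
  have "t \<in> V"
    using assms(6) endpoints by auto
  have avoid: "{z, v} \<noteq> {u1, u2}" "{v, q} \<noteq> {u1, u2}" for v
    using assms(3,4) by (auto simp: doubleton_eq_iff)
  consider "{z, q} \<in> E" | w where "w \<in> V" "{z, w} \<in> E" "{w, q} \<in> E"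
    using adjacent_or_common_neighbor[OF assms(1,2,5)] by blast
  then show ?thesis
  proof cases
    case 1
    then have "walk V (E - {{u1, u2}}) [z, q, t]"
      using assms avoid \<open>t \<in> V\<close> by simp
    then have "gdist V (E - {{u1, u2}}) z t \<le> enat 2"
      using gdist_le_walk_length by (fastforce simp: numeral_2_eq_2)
    then show ?thesis
      by (rule order_trans) (simp add: numeral_eq_enat)
  next
    case 2
    then have "walk V (E - {{u1, u2}}) [z, w, q, t]"
      using assms avoid \<open>t \<in> V\<close> by simp
    then have "gdist V (E - {{u1, u2}}) z t \<le> enat 3"
      using gdist_le_walk_length by (fastforce simp: numeral_3_eq_3)
    then show ?thesis
      by (simp add: numeral_eq_enat)
  qed
qed

lemma far_pair_split:
  assumes "x \<in> V" "z \<in> V" "p \<in> V" "q \<in> V" "far x z" "far p q" "{x, z} \<inter> {p, q} = {}"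
  obtains t z' where "{x, z} = {t, z'}" "t \<in> {u1, u2}" "z' \<notin> {u1, u2}"
proof -
  have "x \<noteq> z"
    using far_imp_neq[OF assms(1,5)] .
  obtain r where "r \<in> {p, q}" "r \<in> {u1, u2}"
    using far_meets_edge[OF assms(3,4,6)] by blast
  then have "r \<notin> {x, z}"
    using assms(7) by blast
  show ?thesis
  proof (cases "x \<in> {u1, u2}")
    case True
    then have "z \<notin> {u1, u2}"
      using \<open>x \<noteq> z\<close> \<open>r \<in> {u1, u2}\<close> \<open>r \<notin> {x, z}\<close> by auto
    with True show ?thesis
      using that by blast
  next
    case False
    then have "z \<in> {u1, u2}"
      using far_meets_edge[OF assms(1,2,5)] by blast
    with False show ?thesis
      using that[of z x] by (simp add: insert_commute)
  qed
qed

lemma disjoint_far_pairs_gdist_le_3: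
  assumes "x \<in> V" "z \<in> V" "p \<in> V" "q \<in> V" "far x z" "far p q" "{x, z} \<inter> {p, q} = {}"
  shows "gdist V (E - {{u1, u2}}) x z \<le> 3"
proof -
  obtain t z' where t: "{x, z} = {t, z'}" "t \<in> {u1, u2}" "z' \<notin> {u1, u2}"
    using far_pair_split[OF assms] .
  have "{p, q} \<inter> {x, z} = {}"
    using assms(7) by blast
  then obtain s q' where s: "{p, q} = {s, q'}" "s \<in> {u1, u2}" "q' \<notin> {u1, u2}"
    using far_pair_split[OF assms(3,4,1,2,6,5)] by blast
  have "t \<in> {x, z}" "z' \<in> {x, z}" "s \<in> {p, q}" "q' \<in> {p, q}"
    using t(1) s(1) by auto
  then have "z' \<in> V" "q' \<in> V" "t \<noteq> s" "z' \<noteq> q'"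
    using assms(1-4,7) by auto
  then have "{s, t} = {u1, u2}"
    using t(2) s(2) by auto
  moreover have "far q' s"
    using assms(6) gdist_doubleton[of p q q' s] s(1) by (simp add: insert_commute)
  ultimately have "{q', t} \<in> E - {{u1, u2}}"
    using far_from_endpoint_adjacent_to_other[OF \<open>q' \<in> V\<close> s(3)] by blast
  then have "gdist V (E - {{u1, u2}}) z' t \<le> 3"
    using gdist_le_3_to_endpoint \<open>z' \<in> V\<close> \<open>q' \<in> V\<close> t(2,3) s(3) \<open>z' \<noteq> q'\<close> by blast
  then show ?thesis
    using gdist_doubleton[of x z z' t] t(1) by (simp add: insert_commute)
qed

text \<open>
  A colour class of size three would be a triangle of far pairs, and two classes of size two would
  be disjoint far pairs, hence at distance at most 3, so both would have colour 2.
\<close>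
lemma inj_on_upper_classes_but_one:
  assumes c: "packing_coloring V (E - {{u1, u2}}) k c"
    and "x \<in> V" "z \<in> V" "x \<noteq> z" "c x = c z" "c x \<noteq> 1"
  shows "inj_on c ({v \<in> V. c v \<noteq> 1} - {z})"
proof (rule inj_onI, rule ccontr)
  fix p q assume p: "p \<in> {v \<in> V. c v \<noteq> 1} - {z}" and q: "q \<in> {v \<in> V. c v \<noteq> 1} - {z}"
    and "c p = c q" "p \<noteq> q"
  note far = packing_coloring_upper_class_gdist[OF c]
  have "far x z" "far p q"
    using far[OF assms(2-6)] far[of p q] p q \<open>c p = c q\<close> \<open>p \<noteq> q\<close> by auto
  show False
  proof (cases "c p = c x")
    case True
    obtain r where "r \<in> {p, q}" "r \<noteq> x"
      using \<open>p \<noteq> q\<close> by blast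
    then have "r \<in> V" "r \<noteq> z" "c r = c x"
      using p q True \<open>c p = c q\<close> by auto
    then show False
      using no_far_triangle[of x z r] far[of x r] far[of z r] \<open>far x z\<close>
        assms(2-6) \<open>r \<noteq> x\<close> by auto
  next
    case False
    then have "{x, z} \<inter> {p, q} = {}"
      using p q \<open>c p = c q\<close> \<open>c x = c z\<close> by auto
    then have "gdist V (E - {{u1, u2}}) x z \<le> 3" "gdist V (E - {{u1, u2}}) p q \<le> 3"
      using disjoint_far_pairs_gdist_le_3[of x z p q] disjoint_far_pairs_gdist_le_3[of p q x z]
        \<open>far x z\<close> \<open>far p q\<close> assms(2,3) p q by (auto simp: Int_commute)
    then have "enat (Suc (c x)) \<le> 3" "enat (Suc (c p)) \<le> 3"
      using packing_coloring_gdist[OF c assms(2-5)] packing_coloring_gdist[OF c, of p q]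
        p q \<open>c p = c q\<close> \<open>p \<noteq> q\<close> by (auto intro: order_trans)
    then have "c x \<le> 2" "c p \<le> 2"
      by (simp_all add: numeral_eq_enat)
    moreover have "c x \<ge> 2" "c p \<ge> 2"
      using packing_coloring_range[OF c] p assms(2,6) by fastforce+
    ultimately show False
      using False by linarith
  qed
qed

lemma card_upper_classes_le:
  assumes c: "packing_coloring V (E - {{u1, u2}}) k c"
  shows "card {v \<in> V. c v \<noteq> 1} \<le> k"
proof (cases "inj_on c {v \<in> V. c v \<noteq> 1}")
  case True
  then show ?thesis
    using card_colors_above_one_le[OF c] by (simp add: card_image)
next
  case False
  then obtain x z where "x \<in> V" "z \<in> V" "x \<noteq> z" "c x = c z" "c x \<noteq> 1" "c z \<noteq> 1"
    unfolding inj_on_def by blast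
  let ?R = "{v \<in> V. c v \<noteq> 1}"
  have "card (?R - {z}) = card (c ` (?R - {z}))"
    using inj_on_upper_classes_but_one[OF c \<open>x \<in> V\<close> \<open>z \<in> V\<close> \<open>x \<noteq> z\<close> \<open>c x = c z\<close> \<open>c x \<noteq> 1\<close>]
    by (simp add: card_image)
  also have "\<dots> \<le> card (c ` ?R)"
    using finite_V by (intro card_mono) auto
  also have "\<dots> \<le> k - 1"
    using card_colors_above_one_le[OF c] .
  moreover have "card ?R > 0"
    using \<open>z \<in> V\<close> \<open>c z \<noteq> 1\<close> finite_V by (subst card_gt_0_iff) auto
  moreover have "k \<ge> 1"
    using packing_coloring_range[OF c \<open>z \<in> V\<close>] by simp
  ultimately show ?thesis
    using \<open>z \<in> V\<close> \<open>c z \<noteq> 1\<close> by simp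
qed

lemma far_pair_condition_if_avoids_large_independent:
  assumes "independent V (E - {{u1, u2}}) A" "indep_num V E \<le> card A"
    and "x \<in> V" "z \<in> V" "far x z" "A \<inter> {x, z} = {}"
  shows far_pair_condition
proof -
  obtain a b y where "{a, b} = {u1, u2}" "y \<in> closed_nbhd V E a" "{y, b} = {x, z}"
    using far_pair_endpoint_neighbor[OF assms(3-5)] by blast
  then have "b \<notin> A" "A \<inter> {y, b} = {}"
    using assms(6) by auto
  then have "\<not> {u1, u2} \<subseteq> A"
    using \<open>{a, b} = {u1, u2}\<close> by auto
  have "{u, v} \<notin> E" if "u \<in> A" "v \<in> A" for u v
  proof
    assume "{u, v} \<in> E"
    moreover have "{u, v} \<noteq> {u1, u2}"
      using that \<open>\<not> {u1, u2} \<subseteq> A\<close> by (metis empty_subsetI insert_subset)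
    ultimately show False
      using assms(1) that unfolding independent_def by blast
  qed
  then have "independent V E A"
    using assms(1) unfolding independent_def by blast
  then have "card A = indep_num V E"
    using card_le_indep_num[OF finite_V] assms(2) by (simp add: le_antisym)
  moreover have "far y b"
    using assms(5) gdist_doubleton[OF \<open>{y, b} = {x, z}\<close>] by simp
  moreover have "(a, b) \<in> {(u1, u2), (u2, u1)}"
    using \<open>{a, b} = {u1, u2}\<close> by (auto simp: doubleton_eq_iff)
  ultimately show ?thesis
    using \<open>independent V E A\<close> \<open>A \<inter> {y, b} = {}\<close> \<open>y \<in> closed_nbhd V E a\<close> by blast
qed

lemma far_pair_condition_if_edge_deletion_lowers:
  assumes chi: "packing_chromatic V (E - {{u1, u2}}) \<le> card V - indep_num V E"
    and alpha: "indep_num V (E - {{u1, u2}}) \<le> indep_num V E"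
  shows far_pair_condition
proof -
  let ?k = "packing_chromatic V (E - {{u1, u2}})"
  obtain c where c: "packing_coloring V (E - {{u1, u2}}) ?k c"
    using packing_coloring_packing_chromatic[OF finite_V] by blast
  let ?C = "{v \<in> V. c v = 1}" and ?R = "{v \<in> V. c v \<noteq> 1}"
  have indep: "independent V (E - {{u1, u2}}) ?C"
    using packing_coloring_first_class_independent[OF simple_graph_Diff[OF simple] c] .
  have card_R: "card ?R = card V - card ?C"
    using card_filter_not[OF finite_V] .
  have "card ?C \<le> indep_num V E"
    using card_le_indep_num[OF finite_V indep] alpha by linarith
  moreover have "indep_num V E \<le> card V" "card ?C \<le> card V"
    using indep_num_le_card[OF finite_V] finite_V by (auto intro: card_mono)
  moreover have "card ?R \<le> ?k"
    using card_upper_classes_le[OF c] .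
  ultimately have large: "indep_num V E \<le> card ?C" and "?k \<le> card ?R"
    using chi card_R by linarith+
  moreover have "?k \<ge> 1"
    using packing_coloring_range[OF c endpoints(1)] by simp
  then have "card (c ` ?R) < ?k"
    using card_colors_above_one_le[OF c] by linarith
  ultimately have "\<not> inj_on c ?R"
    using card_image by fastforce
  then obtain x z where "x \<in> V" "z \<in> V" "x \<noteq> z" "c x = c z" "c x \<noteq> 1" "c z \<noteq> 1"
    unfolding inj_on_def by blast
  have "far x z"
    using packing_coloring_upper_class_gdist[OF c \<open>x \<in> V\<close> \<open>z \<in> V\<close> \<open>x \<noteq> z\<close> \<open>c x = c z\<close> \<open>c x \<noteq> 1\<close>] .
  moreover have "?C \<inter> {x, z} = {}"
    using \<open>c x \<noteq> 1\<close> \<open>c z \<noteq> 1\<close> by auto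
  ultimately show ?thesis
    by (rule far_pair_condition_if_avoids_large_independent[OF indep large \<open>x \<in> V\<close> \<open>z \<in> V\<close>])
qed

lemma packing_chromatic_edge_deleted_le_iff:
  "packing_chromatic V (E - {{u1, u2}}) \<le> card V - indep_num V E \<longleftrightarrow>
     indep_num V E < indep_num V (E - {{u1, u2}}) \<or> far_pair_condition"
proof
  assume le: "packing_chromatic V (E - {{u1, u2}}) \<le> card V - indep_num V E"
  show "indep_num V E < indep_num V (E - {{u1, u2}}) \<or> far_pair_condition"
  proof (cases "indep_num V E < indep_num V (E - {{u1, u2}})")
    case False
    then show ?thesis
      using far_pair_condition_if_edge_deletion_lowers[OF le] by simp
  qed (rule disjI1)
next
  assume "indep_num V E < indep_num V (E - {{u1, u2}}) \<or> far_pair_condition"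
  then show "packing_chromatic V (E - {{u1, u2}}) \<le> card V - indep_num V E"
  proof
    assume "indep_num V E < indep_num V (E - {{u1, u2}})"
    moreover obtain A where "independent V (E - {{u1, u2}}) A" "card A = indep_num V (E - {{u1, u2}})"
      using ex_maximum_independent[OF finite_V] by blast
    moreover note packing_chromatic_le_independent[OF finite_V this(1)]
    moreover have "indep_num V (E - {{u1, u2}}) \<le> card V"
      using indep_num_le_card[OF finite_V] .
    ultimately show ?thesis
      by linarith
  next
    assume far_pair_condition
    then obtain a b y A where ab: "(a, b) \<in> {(u1, u2), (u2, u1)}" and "y \<in> closed_nbhd V E a"
      and "far y b" and A: "independent V E A" "card A = indep_num V E" "A \<inter> {y, b} = {}"
      by blast
    have "a \<in> V" "b \<in> V"
      using ab endpoints by auto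
    then have "y \<in> V"
      using \<open>y \<in> closed_nbhd V E a\<close> unfolding closed_nbhd_def by auto
    have "independent V (E - {{u1, u2}}) A"
      using independent_antimono[OF A(1)] by blast
    then have "packing_chromatic V (E - {{u1, u2}}) \<le> card V - card A"
      using packing_chromatic_le_independent_far_pair[OF finite_V _ \<open>y \<in> V\<close> \<open>b \<in> V\<close>]
        A(3) \<open>far y b\<close> by blast
    then show ?thesis
      using A(2) by simp
  qed
qed

end

theorem theorem4p1:
  fixes V :: "'a set" and E :: "'a set set"
  assumes "simple_graph V E"
    and "diameter V E = 2"
  shows "chi_rho_critical V E \<longleftrightarrow>
    (\<forall>u1 u2. {u1, u2} \<in> E \<longrightarrow>
       indep_num V (E - {{u1, u2}}) > indep_num V E
       \<or> (\<exists>(a, b) \<in> {(u1, u2), (u2, u1)}. \<exists>y \<in> closed_nbhd V E a.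
            gdist V (E - {{u1, u2}}) y b \<ge> 3 \<and>
            (\<exists>A. independent V E A \<and> card A = indep_num V E \<and> A \<inter> {y, b} = {})))"
proof -
  interpret diameter_two_graph V E
    using assms by unfold_locales
  have edge: "diameter_two_graph_edge V E u1 u2" if "{u1, u2} \<in> E" for u1 u2
    using diameter_two_graph_axioms that
    by (simp add: diameter_two_graph_edge_def diameter_two_graph_edge_axioms_def)
  have "chi_rho_critical V E \<longleftrightarrow> (\<forall>e\<in>E. packing_chromatic V (E - {e}) < packing_chromatic V E)"
    using chi_rho_critical_iff_edge_deletions[OF simple] no_isolated_vertex by blast
  also have "\<dots> \<longleftrightarrow> (\<forall>u1 u2. {u1, u2} \<in> E \<longrightarrow>
      packing_chromatic V (E - {{u1, u2}}) \<le> card V - indep_num V E)"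
    using simple unfolding packing_chromatic_eq simple_graph_def by (metis less_Suc_eq_le Suc_eq_plus1)
  finally show ?thesis
    using diameter_two_graph_edge.packing_chromatic_edge_deleted_le_iff[OF edge] by simp
qed

end
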